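(* Let $T_C$ and $\mathcal{C}$ be as in the context, and write an element of $\mathcal{C}$ as $[q_0,\dots,q_{m-1},q_m]$. (a) The $LR$-location of $[q_0,\dots,q_{m-1},q_m]$ in $T_C$ is the string $f([q_0,\dots,q_m])=S(q_0,\dots,q_{m-1},q_m-1)$. (b) If $q_0,\dots,q_{m-1}$ are fixed, then the rational value of $[q_0,\dots,q_{m-1},q_m]\in\mathcal{C}$ is an increasing function of $q_m$ if $m$ is even and a decreasing function of $q_m$ if $m$ is odd. (c) The map $f\colon\mathcal{C}\to\{L,R\}^*$ is a bijection which preserves level (the level of $v$ in $T_C$ equals $|f(v)|$), children ($f$ of the left child of $v$ is $f(v)L$, $f$ of the right child is $f(v)R$), and order ($v<v'$ as rational numbers if and only if $r(f(v))<r(f(v'))$). (d) Let $v\in\mathcal{C}$ have level $\ell$, and let $A$ be the set of values of the vertices of $T_C$ of level less than $\ell$ together with $0$ and $\infty$. Then the left parent of $v$ is the largest element of $A$ smaller than $v$, and the right parent of $v$ is the smallest element of $A$ larger than $v$; i.e. the two parents of $v$ are the two closest lower-level approximations to $v$ from below and above.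
   Context: For integers $q_0\geq0$, $q_1,\dots,q_m\geq1$, the continued fraction $[q_0,\dots,q_m]$ denotes the rational $q_0+1/(q_1+1/(\cdots+1/q_m))$, computed by $[q_0]=q_0$ and $[q_0,\dots,q_{m-1},q_m]=[q_0,\dots,q_{m-2},q_{m-1}+1/q_m]$. $T_C$ is the infinite complete binary tree whose vertices are labelled by finite sequences $[q_0,\dots,q_m]$, defined as follows: the root is $[1]$; for a vertex $[q_0,\dots,q_{m-1},q_m]$, if $m$ is even its left child is $[q_0,\dots,q_{m-1},q_m-1,2]$ and its right child is $[q_0,\dots,q_{m-1},q_m+1]$; if $m$ is odd its left child is $[q_0,\dots,q_{m-1},q_m+1]$ and its right child is $[q_0,\dots,q_{m-1},q_m-1,2]$. (All vertices have $q_0\geq0$, $q_1,\dots,q_{m-1}\geq1$, and $q_m\geq2$ if $m>0$.) $\mathcal{C}$ is the set of vertices of $T_C$, ordered by their rational values. The level of a vertex is its distance from the root. $\{L,R\}^*$ is the free monoid on $L,R$ (strings), empty string $\varepsilon$, $|S|$ = number of symbols. The $LR$-location of a vertex is the string of left ($L$) and right ($R$) moves on the path from the root to it. For $k_0\geq0$, $k_1,\dots,k_m\geq1$ (last exponent allowed to be $0$, in which case that block is omitted), $S(k_0,\dots,k_m)$ is the string $R^{k_0}L^{k_1}R^{k_2}\cdots$ with alternating blocks. Define $f([q_0,\dots,q_{m-1},q_m])=S(q_0,\dots,q_{m-1},q_m-1)$. Define $r(\varepsilon)=1$, $r(SL)=r(S)-2^{-|SL|}$, $r(SR)=r(S)+2^{-|SR|}$.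 Parents of a string $S$: $P_L(S)=SR^{-1}$, $P_R(S)=SL^{-1}$, evaluated recursively by $LL^{-1}=\varepsilon$, $RR^{-1}=\varepsilon$, $LR^{-1}=R^{-1}$, $RL^{-1}=L^{-1}$ (and $\varepsilon R^{-1}=R^{-1}$, $\varepsilon L^{-1}=L^{-1}$). The left (resp. right) parent of a vertex $v\in\mathcal{C}$ with $LR$-location $S$ is the vertex with $LR$-location $P_L(S)$ (resp. $P_R(S)$), where the generalized string $R^{-1}$ corresponds to the continued fraction $[0]=0$ and $L^{-1}$ corresponds to the empty continued fraction $[\,]=\infty$. *)

theory Defs
  imports Complex_Main "HOL-Library.Extended_Real"
begin

datatype lr = L | R

(* value of the continued fraction [q0,...,qm] = q0 + 1/(q1 + 1/(... + 1/qm)); only used on nonempty lists *)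
fun cfval :: "nat list \<Rightarrow> real" where
  "cfval [] = 0"
| "cfval [q] = real q"
| "cfval (q # q' # qs) = real q + 1 / cfval (q' # qs)"

(* children in T_C; m = length qs - 1 *)
definition left_child :: "nat list \<Rightarrow> nat list" where
  "left_child qs = (if even (length qs - 1)
      then butlast qs @ [last qs - 1, 2]
      else butlast qs @ [last qs + 1])"

definition right_child :: "nat list \<Rightarrow> nat list" where
  "right_child qs = (if even (length qs - 1)
      then butlast qs @ [last qs + 1]
      else butlast qs @ [last qs - 1, 2])"

definition child :: "lr \<Rightarrow> nat list \<Rightarrow> nat list" where
  "child d v = (if d = L then left_child v else right_child v)"

definition vert :: "lr list \<Rightarrow> nat list" where
  "vert S = fold child S [1]"

definition CF :: "nat list set" where
  "CF = range vert"

fun Sgo :: "lr \<Rightarrow> nat list \<Rightarrow> lr list" where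
  "Sgo d [] = []"
| "Sgo d (k # ks) = replicate k d @ Sgo (if d = R then L else R) ks"

definition Sblk :: "nat list \<Rightarrow> lr list" where
  "Sblk ks = Sgo R ks"

definition f :: "nat list \<Rightarrow> lr list" where
  "f qs = Sblk (butlast qs @ [last qs - 1])"

(* r(eps) = 1, r(SL) = r(S) - 2^-|SL|, r(SR) = r(S) + 2^-|SR|; rrev works on the reversed string *)
fun rrev :: "lr list \<Rightarrow> real" where
  "rrev [] = 1"
| "rrev (d # T) = rrev T + (if d = R then 1 else -1) / 2 ^ (length T + 1)"

definition rval :: "lr list \<Rightarrow> real" where
  "rval S = rrev (rev S)"

(* S x^{-1} evaluated by the cancellation rules, on the reversed string;
   None stands for the generalized string x^{-1} *)
fun cancel_rev :: "lr \<Rightarrow> lr list \<Rightarrow> lr list option" where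
  "cancel_rev x [] = None"
| "cancel_rev x (y # T) = (if y = x then Some T else cancel_rev x T)"

definition PL :: "lr list \<Rightarrow> lr list option" where
  "PL S = map_option rev (cancel_rev R (rev S))"

definition PR :: "lr list \<Rightarrow> lr list option" where
  "PR S = map_option rev (cancel_rev L (rev S))"

(* value of the left parent (R^{-1} ~ [0] = 0) and right parent (L^{-1} ~ [] = \<infinity>) *)
definition lpval :: "lr list \<Rightarrow> ereal" where
  "lpval S = (case PL S of None \<Rightarrow> 0 | Some S' \<Rightarrow> ereal (cfval (vert S')))"

definition rpval :: "lr list \<Rightarrow> ereal" where
  "rpval S = (case PR S of None \<Rightarrow> \<infinity> | Some S' \<Rightarrow> ereal (cfval (vert S')))"

end

theory Submission
  imports Defs
begin

text \<open>
  A vertex v = [q_0,...,q_(m-1),q_m] of T_C lies strictly between [q_0,...,q_(m-1)]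
  (infinity if m = 0) and [q_0,...,q_(m-1),q_m - 1], and the corresponding intervals of its left
  and right child are the parts of this interval below and above v. Hence the left subtree of v
  lies below v and the right subtree above it; the dyadic values r have the same property, so
  both orders are the in-order of the tree. The endpoints of the interval of a vertex are exactly
  its two parents, and a lower-level vertex inside that interval would have to be a descendant,
  which proves (d). Parts (a) and (c) follow because each step to a child appends exactly one
  letter to f.
\<close>

section \<open>Continued fractions with a real tail\<close>

fun cf_tail :: "nat list \<Rightarrow> real \<Rightarrow> real" where
  "cf_tail [] t = t"
| "cf_tail (x # xs) t = real x + 1 / cf_tail xs t"

lemma cfval_Cons: "ys \<noteq> [] \<Longrightarrow> cfval (x # ys) = real x + 1 / cfval ys"
  by (cases ys) auto

lemma cfval_snoc: "cfval (xs @ [b]) = cf_tail xs (real b)"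
  by (induction xs) (auto simp: cfval_Cons)

lemma cf_tail_snoc: "cf_tail (xs @ [b]) t = cf_tail xs (real b + 1 / t)"
  by (induction xs) auto

lemma cf_tail_pos: "\<forall>y\<in>set xs. 1 \<le> y \<Longrightarrow> 0 < t \<Longrightarrow> 0 < cf_tail xs t"
  by (induction xs) (auto intro: add_pos_pos)

text \<open>As for vertices, the leading entry may be 0; the tail s must be positive only when it
  sits below a fraction bar, i.e. when xs is nonempty.\<close>

lemma cf_tail_alternating:
  assumes "\<forall>y\<in>set (tl xs). 1 \<le> y" and "xs = [] \<or> 0 < s" and "s < t"
  shows "if even (length xs) then cf_tail xs s < cf_tail xs t else cf_tail xs t < cf_tail xs s"
  using assms
proof (induction xs)
  case (Cons x ys)
  have "0 < cf_tail ys s" "0 < cf_tail ys t"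
    using Cons.prems cf_tail_pos by auto
  moreover have "if even (length ys) then cf_tail ys s < cf_tail ys t else cf_tail ys t < cf_tail ys s"
    using Cons by (cases ys) auto
  ultimately show ?case
    by (auto simp: frac_less2 split: if_splits)
qed simp

definition cf_vertex :: "nat list \<Rightarrow> bool" where
  "cf_vertex qs \<longleftrightarrow> (\<exists>p a. qs = p @ [a] \<and> (\<forall>y\<in>set (tl p). 1 \<le> y) \<and> 1 \<le> a \<and> (p \<noteq> [] \<longrightarrow> 2 \<le> a))"

lemma left_child_snoc:
  "left_child (p @ [a]) = (if even (length p) then p @ [a - 1, 2] else p @ [a + 1])"
  by (simp add: left_child_def)

lemma right_child_snoc:
  "right_child (p @ [a]) = (if even (length p) then p @ [a + 1] else p @ [a - 1, 2])"
  by (simp add: right_child_def)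

lemma tl_snoc: "tl (p @ [x]) = (if p = [] then [] else tl p @ [x])"
  by (cases p) auto

lemma cf_vertex_children:
  assumes "cf_vertex v"
  shows "cf_vertex (left_child v)" "cf_vertex (right_child v)"
proof -
  obtain p a where v: "v = p @ [a]" and p: "\<forall>y\<in>set (tl p). 1 \<le> y"
    and a: "1 \<le> a" "p \<noteq> [] \<longrightarrow> 2 \<le> a"
    using assms unfolding cf_vertex_def by blast
  have "cf_vertex (p @ [a + 1])"
    unfolding cf_vertex_def using p a by auto
  moreover have "cf_vertex ((p @ [a - 1]) @ [2])"
    unfolding cf_vertex_def using p a by (intro exI[of _ "p @ [a - 1]"] exI[of _ 2]) (auto simp: tl_snoc)
  ultimately show "cf_vertex (left_child v)" "cf_vertex (right_child v)"
    using v by (simp_all add: left_child_snoc right_child_snoc)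
qed

lemma vert_Nil: "vert [] = [1]"
  by (simp add: vert_def)

lemma vert_snoc: "vert (S @ [d]) = child d (vert S)"
  by (simp add: vert_def)

lemma cf_vertex_vert: "cf_vertex (vert S)"
proof (induction S rule: rev_induct)
  case Nil
  show ?case
    unfolding vert_Nil cf_vertex_def by (intro exI[of _ "[]"] exI[of _ 1]) auto
next
  case (snoc d S)
  then show ?case
    using cf_vertex_children by (simp add: vert_snoc child_def)
qed

lemma Sgo_snoc:
  "Sgo d (xs @ [k]) = Sgo d xs @ replicate k (if even (length xs) then d else if d = R then L else R)"
  by (induction xs arbitrary: d) (auto, metis lr.exhaust)

lemma f_snoc: "f (p @ [a]) = Sgo R p @ replicate (a - 1) (if even (length p) then R else L)"
  by (simp add: f_def Sblk_def Sgo_snoc)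

lemma f_children:
  assumes "cf_vertex v"
  shows "f (left_child v) = f v @ [L]" "f (right_child v) = f v @ [R]"
proof -
  obtain p a where v: "v = p @ [a]" and a: "1 \<le> a"
    using assms unfolding cf_vertex_def by blast
  have "f ((p @ [a - 1]) @ [2]) = f v @ [if even (length p) then L else R]"
    unfolding f_snoc v by (simp add: Sgo_snoc)
  moreover have "f (p @ [a + 1]) = f v @ [if even (length p) then R else L]"
    using v a by (cases a) (simp_all add: f_snoc replicate_append_same)
  ultimately show "f (left_child v) = f v @ [L]" "f (right_child v) = f v @ [R]"
    using v by (simp_all add: left_child_snoc right_child_snoc)
qed

lemma f_vert: "f (vert S) = S"
proof (induction S rule: rev_induct)
  case Nil
  show ?case by (simp add: vert_Nil f_def Sblk_def)
next
  case (snoc d S)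
  then show ?case
    using f_children[OF cf_vertex_vert[of S]] by (cases d) (simp_all add: vert_snoc child_def)
qed

lemma bij_betw_f: "bij_betw f CF UNIV"
  by (rule bij_betw_byWitness[where f' = vert]) (auto simp: CF_def f_vert)

section \<open>The interval of a vertex\<close>

definition cf_truncated :: "nat list \<Rightarrow> ereal" where
  "cf_truncated qs = (if butlast qs = [] then \<infinity> else ereal (cfval (butlast qs)))"

text \<open>The last entry is decreased in the reals, so for the root [1] this is the value 0.\<close>

definition cf_decremented :: "nat list \<Rightarrow> ereal" where
  "cf_decremented qs = ereal (cf_tail (butlast qs) (real (last qs) - 1))"

definition cf_lower :: "nat list \<Rightarrow> ereal" where
  "cf_lower qs = (if even (length qs - 1) then cf_decremented qs else cf_truncated qs)"

definition cf_upper :: "nat list \<Rightarrow> ereal" where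
  "cf_upper qs = (if even (length qs - 1) then cf_truncated qs else cf_decremented qs)"

lemma cf_vertex_in_interval:
  assumes "cf_vertex v"
  shows "cf_lower v < ereal (cfval v) \<and> ereal (cfval v) < cf_upper v"
proof -
  obtain p a where v: "v = p @ [a]" and p: "\<forall>y\<in>set (tl p). 1 \<le> y"
    and a: "1 \<le> a" "p \<noteq> [] \<longrightarrow> 2 \<le> a"
    using assms unfolding cf_vertex_def by blast
  have dec: "if even (length p) then cf_tail p (real a - 1) < cf_tail p (real a)
             else cf_tail p (real a) < cf_tail p (real a - 1)"
    using cf_tail_alternating[of p "real a - 1" "real a"] p a by force
  have trunc: "if even (length p) then cf_tail p (real a) < cfval p else cfval p < cf_tail p (real a)"
    if "p \<noteq> []"
  proof -
    obtain p' c where p': "p = p' @ [c]"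
      using \<open>p \<noteq> []\<close> by (metis rev_exhaust)
    have "\<forall>y\<in>set (tl p'). 1 \<le> y" "p' = [] \<or> 0 < real c"
      using p p' by (auto simp: tl_snoc split: if_splits)
    moreover have "real c < real c + 1 / real a"
      using a by simp
    ultimately have "if even (length p') then cf_tail p' (real c) < cf_tail p' (real c + 1 / real a)
       else cf_tail p' (real c + 1 / real a) < cf_tail p' (real c)"
      by (rule cf_tail_alternating)
    then show ?thesis
      using p' by (simp add: cfval_snoc cf_tail_snoc)
  qed
  show ?thesis
    using dec trunc v
    by (cases "p = []") (auto simp: cfval_snoc cf_lower_def cf_upper_def cf_truncated_def cf_decremented_def)
qed

lemma cf_interval_children:
  assumes "cf_vertex v"
  shows "cf_lower (left_child v) = cf_lower v" "cf_upper (left_child v) = ereal (cfval v)"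
    and "cf_lower (right_child v) = ereal (cfval v)" "cf_upper (right_child v) = cf_upper v"
proof -
  obtain p a where v: "v = p @ [a]" and a: "1 \<le> a"
    using assms unfolding cf_vertex_def by blast
  have "real (a - 1) = real a - 1"
    using a by simp
  then have "cf_tail (p @ [a - 1]) (real 2 - 1) = cf_tail p (real a)"
    and "cfval (p @ [a - 1]) = cf_tail p (real a - 1)"
    by (simp_all add: cf_tail_snoc cfval_snoc)
  then show "cf_lower (left_child v) = cf_lower v" "cf_upper (left_child v) = ereal (cfval v)"
    and "cf_lower (right_child v) = ereal (cfval v)" "cf_upper (right_child v) = cf_upper v"
    using v by (auto simp: left_child_snoc right_child_snoc cf_lower_def cf_upper_def
        cf_truncated_def cf_decremented_def butlast_append cfval_snoc)
qed

definition node_val :: "lr list \<Rightarrow> real" where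
  "node_val S = cfval (vert S)"

definition node_lo :: "lr list \<Rightarrow> ereal" where
  "node_lo S = cf_lower (vert S)"

definition node_hi :: "lr list \<Rightarrow> ereal" where
  "node_hi S = cf_upper (vert S)"

lemma node_lo_Nil: "node_lo [] = 0" and node_hi_Nil: "node_hi [] = \<infinity>"
  by (simp_all add: node_lo_def node_hi_def vert_Nil cf_lower_def cf_upper_def
      cf_truncated_def cf_decremented_def zero_ereal_def)

lemma node_interval_snoc:
  "node_lo (S @ [L]) = node_lo S" "node_hi (S @ [L]) = ereal (node_val S)"
  "node_lo (S @ [R]) = ereal (node_val S)" "node_hi (S @ [R]) = node_hi S"
  using cf_interval_children[OF cf_vertex_vert[of S]]
  by (simp_all add: node_lo_def node_hi_def node_val_def vert_snoc child_def)

lemma node_in_interval: "node_lo S < ereal (node_val S)" "ereal (node_val S) < node_hi S"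
  using cf_vertex_in_interval[OF cf_vertex_vert[of S]] by (simp_all add: node_lo_def node_hi_def node_val_def)

lemma node_interval_nested: "node_lo S \<le> node_lo (S @ T) \<and> node_hi (S @ T) \<le> node_hi S"
proof (induction T rule: rev_induct)
  case (snoc d T)
  then show ?case
    using node_in_interval[of "S @ T"] node_interval_snoc[of "S @ T"]
    by (cases d) (auto simp flip: append_assoc)
qed simp

lemma node_val_subtrees: "node_val (S @ L # T) < node_val S" "node_val S < node_val (S @ R # T)"
proof -
  have "ereal (node_val ((S @ [L]) @ T)) < node_hi ((S @ [L]) @ T)"
    by (rule node_in_interval)
  also have "\<dots> \<le> node_hi (S @ [L])"
    using node_interval_nested by blast
  finally show "node_val (S @ L # T) < node_val S"
    by (simp add: node_interval_snoc)
  have "node_lo (S @ [R]) \<le> node_lo ((S @ [R]) @ T)"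
    using node_interval_nested by blast
  also have "\<dots> < ereal (node_val ((S @ [R]) @ T))"
    by (rule node_in_interval)
  finally show "node_val S < node_val (S @ R # T)"
    by (simp add: node_interval_snoc)
qed

section \<open>The dyadic values\<close>

lemma rval_snoc: "rval (S @ [d]) = rval S + (if d = R then 1 else -1) / 2 ^ (length S + 1)"
  by (simp add: rval_def)

lemma rval_append_dist: "\<bar>rval (S @ T) - rval S\<bar> \<le> 1 / 2 ^ length S - 1 / 2 ^ (length S + length T)"
proof (induction T rule: rev_induct)
  case (snoc d T)
  define k where "k = length S + length T"
  define e :: real where "e = (if d = R then 1 else -1) / 2 ^ (k + 1)"
  have "rval (S @ T @ [d]) - rval S = (rval (S @ T) - rval S) + e"
    using rval_snoc[of "S @ T" d] unfolding e_def k_def by simp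
  then have "\<bar>rval (S @ T @ [d]) - rval S\<bar> \<le> \<bar>rval (S @ T) - rval S\<bar> + \<bar>e\<bar>"
    by (metis abs_triangle_ineq)
  also have "\<dots> \<le> 1 / 2 ^ length S - 1 / 2 ^ (k + 1)"
    using snoc.IH unfolding e_def k_def by simp
  finally show ?case
    by (simp add: k_def)
qed simp

lemma rval_subtrees: "rval (S @ L # T) < rval S" "rval S < rval (S @ R # T)"
proof -
  have near: "\<bar>rval ((S @ [d]) @ T) - rval (S @ [d])\<bar> < 1 / 2 ^ (length S + 1)" for d
  proof -
    have "\<bar>rval ((S @ [d]) @ T) - rval (S @ [d])\<bar>
        \<le> 1 / 2 ^ (length S + 1) - 1 / 2 ^ (length S + 1 + length T)"
      using rval_append_dist[of "S @ [d]" T] by simp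
    also have "\<dots> < 1 / 2 ^ (length S + 1)"
      by simp
    finally show ?thesis .
  qed
  show "rval (S @ L # T) < rval S" "rval S < rval (S @ R # T)"
    using near[of L] near[of R] rval_snoc[of S L] rval_snoc[of S R] unfolding abs_less_iff by auto
qed

text \<open>The order in which an in-order traversal visits the vertices: L before \<epsilon> before R.\<close>

fun lr_less :: "lr list \<Rightarrow> lr list \<Rightarrow> bool" where
  "lr_less [] [] = False"
| "lr_less [] (d # T) = (d = R)"
| "lr_less (d # T) [] = (d = L)"
| "lr_less (d1 # T1) (d2 # T2) = (if d1 = d2 then lr_less T1 T2 else d1 = L)"

lemma less_iff_lr_less_if_subtrees:
  fixes g :: "lr list \<Rightarrow> real"
  assumes subtrees: "\<And>S T. g (S @ L # T) < g S" "\<And>S T. g S < g (S @ R # T)"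
  shows "g (P @ S1) < g (P @ S2) \<longleftrightarrow> lr_less S1 S2"
proof (induction S1 arbitrary: S2 P)
  case Nil
  show ?case
    using subtrees[of P] by (cases S2; cases "hd S2") (auto simp: less_not_sym)
next
  case (Cons d1 T1)
  show ?case
  proof (cases S2)
    case Nil
    then show ?thesis
      using subtrees[of P T1] by (cases d1) (auto simp: less_not_sym)
  next
    case (Cons d2 T2)
    then show ?thesis
      using Cons.IH[of "P @ [d1]" T2] subtrees[of P T1] subtrees[of P T2]
      by (cases d1; cases d2) (auto dest: less_trans simp: less_not_sym)
  qed
qed

lemma node_val_less_iff_rval_less: "node_val S1 < node_val S2 \<longleftrightarrow> rval S1 < rval S2"
  using less_iff_lr_less_if_subtrees[of node_val "[]"] less_iff_lr_less_if_subtrees[of rval "[]"]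
    node_val_subtrees rval_subtrees by simp

section \<open>The parents\<close>

lemma PL_snoc: "PL [] = None" "PL (S @ [R]) = Some S" "PL (S @ [L]) = PL S"
  by (simp_all add: PL_def)

lemma PR_snoc: "PR [] = None" "PR (S @ [L]) = Some S" "PR (S @ [R]) = PR S"
  by (simp_all add: PR_def)

lemma lpval_eq_node_lo: "lpval S = node_lo S"
proof (induction S rule: rev_induct)
  case (snoc d S)
  then show ?case
    by (cases d) (simp_all add: lpval_def PL_snoc node_interval_snoc node_val_def)
qed (simp add: lpval_def PL_snoc node_lo_Nil)

lemma rpval_eq_node_hi: "rpval S = node_hi S"
proof (induction S rule: rev_induct)
  case (snoc d S)
  then show ?case
    by (cases d) (simp_all add: rpval_def PR_snoc node_interval_snoc node_val_def)
qed (simp add: rpval_def PR_snoc node_hi_Nil)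

lemma length_cancel_rev: "cancel_rev x T = Some T' \<Longrightarrow> length T' < length T"
  by (induction T) (auto split: if_splits)

lemma length_PL: "PL S = Some S' \<Longrightarrow> length S' < length S"
  unfolding PL_def using length_cancel_rev by fastforce

lemma length_PR: "PR S = Some S' \<Longrightarrow> length S' < length S"
  unfolding PR_def using length_cancel_rev by fastforce

lemma node_lo_nonneg: "0 \<le> node_lo S"
  using node_interval_nested[of "[]" S] node_lo_Nil by simp

text \<open>Only the subtree of S enters the interval of S: each step L or R away from a vertex
  leaves the interval of the child on the corresponding side.\<close>

lemma in_node_interval_imp_extension:
  "node_lo S < ereal (node_val T) \<Longrightarrow> ereal (node_val T) < node_hi S \<Longrightarrow> \<exists>U. T = S @ U"
proof (induction S arbitrary: T rule: rev_induct)
  case (snoc d S)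
  have "(if d = L then node_val T < node_val S else node_val S < node_val T)
    \<and> node_lo S < ereal (node_val T) \<and> ereal (node_val T) < node_hi S"
  proof (cases d)
    case L
    have lo: "node_lo S < ereal (node_val T)"
      using snoc.prems L by (simp add: node_interval_snoc)
    have below: "ereal (node_val T) < ereal (node_val S)"
      using snoc.prems L by (simp add: node_interval_snoc)
    also have "\<dots> < node_hi S"
      by (rule node_in_interval)
    finally show ?thesis
      using L lo below by simp
  next
    case R
    have hi: "ereal (node_val T) < node_hi S"
      using snoc.prems R by (simp add: node_interval_snoc)
    have "node_lo S < ereal (node_val S)"
      by (rule node_in_interval)
    also have above: "\<dots> < ereal (node_val T)"
      using snoc.prems R by (simp add: node_interval_snoc)
    finally show ?thesis
      using R hi above by simp
  qed
  then have side: "if d = L then node_val T < node_val S else node_val S < node_val T"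
    and "\<exists>U. T = S @ U"
    using snoc.IH by auto
  then obtain U where U: "T = S @ U"
    by blast
  show ?case
  proof (cases U)
    case Nil
    then show ?thesis
      using side U by (auto split: if_splits)
  next
    case (Cons d' U')
    then show ?thesis
      using side U node_val_subtrees[of S U'] by (cases d; cases d') auto
  qed
qed simp

lemma parents_closest:
  fixes S :: "lr list"
  defines "A \<equiv> {ereal (cfval (vert T)) | T. length T < length S} \<union> {0, \<infinity>}"
    and "x \<equiv> ereal (cfval (vert S))"
  shows "lpval S \<in> A" "lpval S < x" "\<And>a. a \<in> A \<Longrightarrow> a < x \<Longrightarrow> a \<le> lpval S"
    and "rpval S \<in> A" "x < rpval S" "\<And>a. a \<in> A \<Longrightarrow> x < a \<Longrightarrow> rpval S \<le> a"
proof -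
  have x: "x = ereal (node_val S)"
    by (simp add: x_def node_val_def)
  have lo: "node_lo S < x" and hi: "x < node_hi S"
    using node_in_interval x by simp_all
  have outside: "\<not> (node_lo S < ereal (node_val T) \<and> ereal (node_val T) < node_hi S)"
    if "length T < length S" for T
    using in_node_interval_imp_extension[of S T] that by auto
  have cases_A: "(\<exists>T. a = ereal (node_val T) \<and> length T < length S) \<or> a = 0 \<or> a = \<infinity>"
    if "a \<in> A" for a
    using that unfolding A_def node_val_def by auto
  show "lpval S \<in> A"
    by (cases "PL S") (auto simp: lpval_def A_def dest: length_PL)
  show "rpval S \<in> A"
    by (cases "PR S") (auto simp: rpval_def A_def dest: length_PR)
  show "lpval S < x" "x < rpval S"
    using lo hi by (simp_all add: lpval_eq_node_lo rpval_eq_node_hi)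
  show "a \<le> lpval S" if "a \<in> A" "a < x" for a
    using cases_A[OF \<open>a \<in> A\<close>]
  proof (elim disjE exE conjE)
    fix T
    assume a: "a = ereal (node_val T)" and len: "length T < length S"
    moreover have "ereal (node_val T) < node_hi S"
      using \<open>a < x\<close> hi a by (metis less_trans)
    ultimately show ?thesis
      using outside[OF len] by (auto simp: lpval_eq_node_lo not_less)
  qed (use \<open>a < x\<close> node_lo_nonneg in \<open>auto simp: lpval_eq_node_lo\<close>)
  show "rpval S \<le> a" if "a \<in> A" "x < a" for a
    using cases_A[OF \<open>a \<in> A\<close>]
  proof (elim disjE exE conjE)
    fix T
    assume a: "a = ereal (node_val T)" and len: "length T < length S"
    moreover have "node_lo S < ereal (node_val T)"
      using \<open>x < a\<close> lo a by (metis less_trans)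
    ultimately show ?thesis
      using outside[OF len] by (auto simp: rpval_eq_node_hi not_less)
  next
    assume "a = 0"
    then show ?thesis
      using \<open>x < a\<close> lo node_lo_nonneg by (metis less_trans not_le)
  qed simp
qed

theorem theorem4:
  shows
    \<comment> \<open>(a)\<close>
    "(\<forall>S. f (vert S) = S)
   \<and> \<comment> \<open>(b)\<close>
     (\<forall>qs a b. qs @ [a] \<in> CF \<longrightarrow> qs @ [b] \<in> CF \<longrightarrow> a < b \<longrightarrow>
        (if even (length qs) then cfval (qs @ [a]) < cfval (qs @ [b])
         else cfval (qs @ [a]) > cfval (qs @ [b])))
   \<and> \<comment> \<open>(c)\<close>
     bij_betw f CF UNIV
   \<and> (\<forall>S. length (f (vert S)) = length S)
   \<and> (\<forall>v\<in>CF. f (left_child v) = f v @ [L] \<and> f (right_child v) = f v @ [R])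
   \<and> (\<forall>v\<in>CF. \<forall>v'\<in>CF. cfval v < cfval v' \<longleftrightarrow> rval (f v) < rval (f v'))
   \<and> \<comment> \<open>(d)\<close>
     (\<forall>S. let A = {ereal (cfval (vert T)) | T. length T < length S} \<union> {0, \<infinity>};
              x = ereal (cfval (vert S)) in
        (lpval S \<in> A \<and> lpval S < x \<and> (\<forall>a\<in>A. a < x \<longrightarrow> a \<le> lpval S))
      \<and> (rpval S \<in> A \<and> x < rpval S \<and> (\<forall>a\<in>A. x < a \<longrightarrow> rpval S \<le> a)))"
proof (intro conjI allI impI ballI)
  have vertex: "cf_vertex v" if "v \<in> CF" for v
    using that cf_vertex_vert unfolding CF_def by auto
  show "f (vert S) = S" "length (f (vert S)) = length S" for S
    by (simp_all add: f_vert)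
  show "if even (length qs) then cfval (qs @ [a]) < cfval (qs @ [b]) else cfval (qs @ [a]) > cfval (qs @ [b])"
    if "qs @ [a] \<in> CF" "a < b" for qs a b
    using vertex[OF that(1)] that(2) cf_tail_alternating[of qs "real a" "real b"]
    by (auto simp: cf_vertex_def cfval_snoc)
  show "bij_betw f CF UNIV"
    by (rule bij_betw_f)
  show "f (left_child v) = f v @ [L]" "f (right_child v) = f v @ [R]" if "v \<in> CF" for v
    using f_children vertex[OF that] by simp_all
  show "cfval v < cfval v' \<longleftrightarrow> rval (f v) < rval (f v')" if "v \<in> CF" "v' \<in> CF" for v v'
    using that node_val_less_iff_rval_less by (auto simp: CF_def f_vert node_val_def)
  show "let A = {ereal (cfval (vert T)) | T. length T < length S} \<union> {0, \<infinity>};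
            x = ereal (cfval (vert S)) in
          (lpval S \<in> A \<and> lpval S < x \<and> (\<forall>a\<in>A. a < x \<longrightarrow> a \<le> lpval S))
        \<and> (rpval S \<in> A \<and> x < rpval S \<and> (\<forall>a\<in>A. x < a \<longrightarrow> rpval S \<le> a))" for S
    using parents_closest[where S = S] by (simp add: Let_def)
qed

end
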